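(* Let $p,q\ge2$, $\mu\in\mathbb{C}\setminus\{0\}$ and $P(u,v;\mu)=\mu(u^p+\bar u)+v^q+\bar v$, regarded as a map $\mathbb{R}^4\to\mathbb{R}^2$. If $z_0=(u_0,v_0)$ is a singular point of $P$ (a point where its real differential has rank $<2$), then $p|u_0|^{p-1}=q|v_0|^{q-1}=1$ (in particular $u_0v_0\neq0$) and, for any choice of real representatives of $\arg u_0,\arg v_0,\arg\mu$, there is an integer $\kappa$ with $\frac{p-1}{2}\arg u_0+\arg\mu=\frac{q-1}{2}\arg v_0+\kappa\pi$. *)

theory Defs
  imports "HOL-Analysis.Analysis"
begin

definition Pmap :: "nat \<Rightarrow> nat \<Rightarrow> complex \<Rightarrow> complex \<times> complex \<Rightarrow> complex" where
  "Pmap p q \<mu> z = \<mu> * ((fst z) ^ p + cnj (fst z)) + (snd z) ^ q + cnj (snd z)"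

definition singular_point :: "('a::real_normed_vector \<Rightarrow> 'b::real_normed_vector) \<Rightarrow> 'a \<Rightarrow> bool" where
  "singular_point f z \<longleftrightarrow> (\<exists>D. (f has_derivative D) (at z) \<and> dim (range D) < 2)"

end

theory Submission imports Defs begin

text \<open>The real differential of \<open>P\<close> at \<open>(u,v)\<close> is
  \<open>(h,k) \<mapsto> \<mu>(A h + conj h) + B k + conj k\<close> with \<open>A = p u^(p-1)\<close>, \<open>B = q v^(q-1)\<close>.
  Its rank is below 2 iff its image lies in a real line, i.e. iff
  \<open>Im (conj (D x) * D y) = 0\<close> for all \<open>x, y\<close>. On each factor this forces the Jacobian
  determinant \<open>|A|\<^sup>2 - 1\<close> (resp. \<open>|B|\<^sup>2 - 1\<close>) to vanish. Writing then \<open>A = cis \<alpha>\<close>, the first factor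
  is mapped onto the line through \<open>\<mu> cis (\<alpha>/2)\<close> and the second onto the line through
  \<open>cis (\<beta>/2)\<close>; these two lines coincide, which is the angle relation.\<close>

definition dPmap :: "nat \<Rightarrow> nat \<Rightarrow> complex \<Rightarrow> complex \<times> complex \<Rightarrow> complex \<times> complex \<Rightarrow> complex" where
  "dPmap p q \<mu> z w = \<mu> * (of_nat p * fst z ^ (p - 1) * fst w + cnj (fst w))
     + of_nat q * snd z ^ (q - 1) * snd w + cnj (snd w)"

lemma has_derivative_Pmap: "(Pmap p q \<mu> has_derivative dPmap p q \<mu> z) (at z)"
  unfolding Pmap_def dPmap_def
  by (rule derivative_eq_intros refl | simp)+ (auto simp: fun_eq_iff algebra_simps)

text \<open>Cramer's rule in \<open>\<real>\<^sup>2\<close>: \<open>Im (cnj x * y)\<close> is the determinant of \<open>x, y\<close>.\<close>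
lemma complex_eq_Im_cnj_combination:
  fixes x y z :: complex
  assumes "Im (cnj x * y) \<noteq> 0"
  shows "z = (Im (cnj z * y) / Im (cnj x * y)) *\<^sub>R x + (Im (cnj x * z) / Im (cnj x * y)) *\<^sub>R y"
proof -
  define d where "d = Im (cnj x * y)"
  have "d *\<^sub>R z = Im (cnj z * y) *\<^sub>R x + Im (cnj x * z) *\<^sub>R y"
    unfolding d_def complex_eq_iff by (simp add: algebra_simps)
  then have "(1 / d) *\<^sub>R (d *\<^sub>R z) = (1 / d) *\<^sub>R (Im (cnj z * y) *\<^sub>R x + Im (cnj x * z) *\<^sub>R y)"
    by simp
  then show ?thesis using assms unfolding d_def[symmetric] by (simp add: scaleR_add_right)
qed

lemma Im_cnj_mult_eq_0_if_dim_range_less_2: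
  fixes D :: "'a::real_vector \<Rightarrow> complex"
  assumes "linear D" "dim (range D) < 2"
  shows "Im (cnj (D x) * D y) = 0"
proof (rule ccontr)
  assume nz: "Im (cnj (D x) * D y) \<noteq> 0"
  have "z \<in> range D" for z
  proof -
    let ?s = "Im (cnj z * D y) / Im (cnj (D x) * D y)"
    let ?t = "Im (cnj (D x) * z) / Im (cnj (D x) * D y)"
    have "z = ?s *\<^sub>R D x + ?t *\<^sub>R D y" by (rule complex_eq_Im_cnj_combination[OF nz])
    also have "\<dots> = D (?s *\<^sub>R x + ?t *\<^sub>R y)"
      using assms(1) by (simp add: linear_add linear_scale)
    finally show ?thesis by blast
  qed
  then have "range D = UNIV" by auto
  with assms(2) show False by (simp add: dim_UNIV)
qed

lemma singular_point_Pmap_collinear: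
  assumes "singular_point (Pmap p q \<mu>) z"
  shows "Im (cnj (dPmap p q \<mu> z x) * dPmap p q \<mu> z y) = 0"
proof -
  obtain D where D: "(Pmap p q \<mu> has_derivative D) (at z)" "dim (range D) < 2"
    using assms unfolding singular_point_def by blast
  have "D = dPmap p q \<mu> z" using has_derivative_unique[OF D(1) has_derivative_Pmap] .
  with D show ?thesis
    using Im_cnj_mult_eq_0_if_dim_range_less_2 has_derivative_linear by blast
qed

lemma cmod_eq_if_semilinear_collinear:
  assumes "\<And>h h'. Im (cnj (A * h + B * cnj h) * (A * h' + B * cnj h')) = 0"
  shows "cmod A = cmod B"
proof -
  have "(cmod A)\<^sup>2 - (cmod B)\<^sup>2 = Im (cnj (A * 1 + B * cnj 1) * (A * \<i> + B * cnj \<i>))"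
    unfolding cmod_power2 by (simp add: algebra_simps power2_eq_square)
  also have "\<dots> = 0" by (rule assms)
  finally show ?thesis by (simp add: power2_eq_iff_nonneg)
qed

lemma singular_point_Pmap_norms:
  assumes "singular_point (Pmap p q \<mu>) (u0, v0)" "\<mu> \<noteq> 0"
  shows "real p * cmod u0 ^ (p - 1) = 1" "real q * cmod v0 ^ (q - 1) = 1"
proof -
  note coll = singular_point_Pmap_collinear[OF assms(1)]
  have "Im (cnj ((\<mu> * of_nat p * u0 ^ (p - 1)) * h + \<mu> * cnj h)
          * ((\<mu> * of_nat p * u0 ^ (p - 1)) * h' + \<mu> * cnj h')) = 0" for h h'
    using coll[of "(h, 0)" "(h', 0)"] by (simp add: dPmap_def algebra_simps)
  then have "cmod (\<mu> * of_nat p * u0 ^ (p - 1)) = cmod \<mu>"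
    by (rule cmod_eq_if_semilinear_collinear)
  with assms(2) show "real p * cmod u0 ^ (p - 1) = 1"
    by (simp add: norm_mult norm_power)
  have "Im (cnj ((of_nat q * v0 ^ (q - 1)) * k + 1 * cnj k)
          * ((of_nat q * v0 ^ (q - 1)) * k' + 1 * cnj k')) = 0" for k k'
    using coll[of "(0, k)" "(0, k')"] by (simp add: dPmap_def algebra_simps)
  then have "cmod (of_nat q * v0 ^ (q - 1)) = cmod 1"
    by (rule cmod_eq_if_semilinear_collinear)
  then show "real q * cmod v0 ^ (q - 1) = 1"
    by (simp add: norm_mult norm_power)
qed

lemma of_nat_mult_power_polar:
  assumes "u = complex_of_real r * cis a" "real p * r ^ (p - 1) = 1"
  shows "of_nat p * u ^ (p - 1) = cis ((real p - 1) * a)"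
proof -
  have "p \<ge> 1" using assms(2) by (cases p) auto
  have "of_nat p * u ^ (p - 1) = complex_of_real (real p * r ^ (p - 1)) * cis (real (p - 1) * a)"
    using Complex.DeMoivre[of a "p - 1"] unfolding assms(1) power_mult_distrib by (simp del: of_nat_diff)
  also have "real (p - 1) = real p - 1" using \<open>p \<ge> 1\<close> by simp
  finally show ?thesis unfolding assms(2) by simp
qed

lemma cis_double_mult_cis_neg_add_cnj: "cis (2 * t) * cis (- t) + cnj (cis (- t)) = 2 * cis t"
  by (simp add: cis_mult complex_eq_iff)

lemma angle_eq_mod_pi_if_Im_cnj_mult_eq_0:
  assumes "Im (cnj (complex_of_real X * cis s) * (complex_of_real Y * cis t)) = 0" "X * Y \<noteq> 0"
  shows "\<exists>k::int. s = t + real_of_int k * pi"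
proof -
  have "Im (cnj (complex_of_real X * cis s) * (complex_of_real Y * cis t)) = X * Y * sin (t - s)"
    by (simp add: sin_diff algebra_simps)
  with assms have "sin (s - t) = 0" by (simp add: sin_diff)
  then obtain k :: int where "s - t = k * pi" by (auto simp: sin_zero_iff_int2)
  then show ?thesis by (intro exI[of _ k]) simp
qed

lemma singular_point_Pmap_angle:
  assumes sing: "singular_point (Pmap p q \<mu>) (u0, v0)" and "\<mu> \<noteq> 0"
    and polar: "u0 = complex_of_real (cmod u0) * cis a" "v0 = complex_of_real (cmod v0) * cis b"
      "\<mu> = complex_of_real (cmod \<mu>) * cis c"
  shows "\<exists>\<kappa>::int. (real p - 1) / 2 * a + c = (real q - 1) / 2 * b + real_of_int \<kappa> * pi"
proof -
  define \<alpha> where "\<alpha> = (real p - 1) / 2 * a"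
  define \<beta> where "\<beta> = (real q - 1) / 2 * b"
  note norms = singular_point_Pmap_norms[OF sing \<open>\<mu> \<noteq> 0\<close>]
  have A: "of_nat p * u0 ^ (p - 1) = cis (2 * \<alpha>)"
    using of_nat_mult_power_polar[OF polar(1) norms(1)] by (simp add: \<alpha>_def)
  have B: "of_nat q * v0 ^ (q - 1) = cis (2 * \<beta>)"
    using of_nat_mult_power_polar[OF polar(2) norms(2)] by (simp add: \<beta>_def)
  have "dPmap p q \<mu> (u0, v0) (cis (- \<alpha>), 0) = \<mu> * (cis (2 * \<alpha>) * cis (- \<alpha>) + cnj (cis (- \<alpha>)))"
    unfolding dPmap_def fst_conv snd_conv A by simp
  also have "\<dots> = \<mu> * (2 * cis \<alpha>)" by (simp only: cis_double_mult_cis_neg_add_cnj)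
  also have "\<dots> = complex_of_real (2 * cmod \<mu>) * cis (\<alpha> + c)"
    by (subst polar(3)) (simp add: cis_mult algebra_simps)
  finally have du: "dPmap p q \<mu> (u0, v0) (cis (- \<alpha>), 0) = complex_of_real (2 * cmod \<mu>) * cis (\<alpha> + c)" .
  have "dPmap p q \<mu> (u0, v0) (0, cis (- \<beta>)) = cis (2 * \<beta>) * cis (- \<beta>) + cnj (cis (- \<beta>))"
    unfolding dPmap_def fst_conv snd_conv B by simp
  also have "\<dots> = complex_of_real 2 * cis \<beta>"
    by (simp add: cis_double_mult_cis_neg_add_cnj)
  finally have dv: "dPmap p q \<mu> (u0, v0) (0, cis (- \<beta>)) = complex_of_real 2 * cis \<beta>" .
  have "\<exists>\<kappa>::int. \<alpha> + c = \<beta> + real_of_int \<kappa> * pi"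
    using singular_point_Pmap_collinear[OF sing, of "(cis (- \<alpha>), 0)" "(0, cis (- \<beta>))"]
    by (intro angle_eq_mod_pi_if_Im_cnj_mult_eq_0[where X = "2 * cmod \<mu>" and Y = 2])
      (simp_all add: du dv \<open>\<mu> \<noteq> 0\<close>)
  then show ?thesis by (simp add: \<alpha>_def \<beta>_def)
qed

theorem lemma3p2:
  fixes p q :: nat and \<mu> u0 v0 :: complex
  assumes "p \<ge> 2" and "q \<ge> 2" and "\<mu> \<noteq> 0"
    and "singular_point (Pmap p q \<mu>) (u0, v0)"
  shows "real p * cmod u0 ^ (p - 1) = 1 \<and> real q * cmod v0 ^ (q - 1) = 1
    \<and> u0 \<noteq> 0 \<and> v0 \<noteq> 0
    \<and> (\<forall>a b c :: real. u0 = complex_of_real (cmod u0) * cis a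
          \<and> v0 = complex_of_real (cmod v0) * cis b
          \<and> \<mu> = complex_of_real (cmod \<mu>) * cis c
        \<longrightarrow> (\<exists>\<kappa>::int. (real p - 1) / 2 * a + c = (real q - 1) / 2 * b + real_of_int \<kappa> * pi))"
proof -
  note norms = singular_point_Pmap_norms[OF assms(4,3)]
  have "u0 \<noteq> 0" using norms(1) \<open>p \<ge> 2\<close> by (cases "u0 = 0") (auto simp: power_0_left)
  moreover have "v0 \<noteq> 0" using norms(2) \<open>q \<ge> 2\<close> by (cases "v0 = 0") (auto simp: power_0_left)
  ultimately show ?thesis
    using norms singular_point_Pmap_angle[OF assms(4,3)] by blast
qed

end
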